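(* Any finitely passive learning dynamic guarantees constant regret.
   Context: $\Delta^n=\{\mathbf{x}\in\mathbb{R}^n: x_j\ge 0,\ \sum_j x_j=1\}$; $\mathbf{e}_j$ is the $j$-th standard basis vector. A learning dynamic over $n$ actions is specified by a conversion function $f:\mathbb{R}^n\to\Delta^n$: given an initial state $\mathbf{q}^0\in\mathbb{R}^n$ and an input (payoff) function $\mathbf{p}:[0,\infty)\to\mathbb{R}^n$ square integrable on bounded intervals, the state is $\mathbf{q}(t)=\mathbf{q}^0+\int_0^t\mathbf{p}(\tau)\,d\tau$ and the strategy is $\mathbf{x}(t)=f(\mathbf{q}(t))$. The learning operator with shift $\mathbf{x}^*\in\mathbb{R}^n$ has state $\mathbf{q}$, input $\mathbf{p}$, output $\mathbf{x}-\mathbf{x}^*$; it is finitely passive if there is a storage function $L:\mathbb{R}^n\to\mathbb{R}$, bounded from below, such that for every $\mathbf{q}^0$, every $\mathbf{p}$ and every $t\ge0$, $L(\mathbf{q}(t))\le L(\mathbf{q}^0)+\int_0^t\langle\mathbf{p}(\tau),\mathbf{x}(\tau)-\mathbf{x}^*\rangle\,d\tau$. A learning dynamic is finitely passive if for every action $j$ its learning operator with shift $\mathbf{e}_j$ is finitely passive. The regret at time $T>0$ is $\max_j\int_0^T p_j(\tau)\,d\tau-\int_0^T\langle\mathbf{p}(\tau),\mathbf{x}(\tau)\rangle\,d\tau$. A learning dynamic guarantees constant regret if for every $\mathbf{p}$ and every $T>0$ the regret at time $T$ is bounded above by a constant depending only on $\mathbf{q}^0$. *)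

theory Defs
  imports "HOL-Analysis.Analysis"
begin

definition prob_simplex :: "(real^'n) set" where
  "prob_simplex = {x. (\<forall>j. x $ j \<ge> 0) \<and> (\<Sum>j\<in>UNIV. x $ j) = 1}"

definition admissible_input :: "(real \<Rightarrow> real^'n) \<Rightarrow> bool" where
  "admissible_input p \<longleftrightarrow>
     set_borel_measurable lborel {0..} p \<and>
     (\<forall>t\<ge>0. set_integrable lborel {0..t} (\<lambda>\<tau>. (norm (p \<tau>))^2))"

definition state :: "real^'n \<Rightarrow> (real \<Rightarrow> real^'n) \<Rightarrow> real \<Rightarrow> real^'n" where
  "state q0 p t = q0 + (LINT \<tau>:{0..t}|lborel. p \<tau>)"

definition finitely_passive_op ::
  "(real^'n \<Rightarrow> real^'n) \<Rightarrow> real^'n \<Rightarrow> bool" where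
  "finitely_passive_op f xs \<longleftrightarrow>
     (\<exists>L :: real^'n \<Rightarrow> real. bdd_below (range L) \<and>
        (\<forall>q0 p t. admissible_input p \<and> t \<ge> 0 \<longrightarrow>
           L (state q0 p t) \<le> L q0 +
             (LINT \<tau>:{0..t}|lborel. inner (p \<tau>) (f (state q0 p \<tau>) - xs))))"

definition finitely_passive :: "(real^'n \<Rightarrow> real^'n) \<Rightarrow> bool" where
  "finitely_passive f \<longleftrightarrow> (\<forall>j. finitely_passive_op f (axis j 1))"

definition regret ::
  "(real^'n \<Rightarrow> real^'n) \<Rightarrow> real^'n \<Rightarrow> (real \<Rightarrow> real^'n) \<Rightarrow> real \<Rightarrow> real" where
  "regret f q0 p T =
     Max (range (\<lambda>j. LINT \<tau>:{0..T}|lborel. p \<tau> $ j))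
     - (LINT \<tau>:{0..T}|lborel. inner (p \<tau>) (f (state q0 p \<tau>)))"

definition guarantees_constant_regret :: "(real^'n \<Rightarrow> real^'n) \<Rightarrow> bool" where
  "guarantees_constant_regret f \<longleftrightarrow>
     (\<forall>q0. \<exists>C. \<forall>p T. admissible_input p \<and> T > 0 \<longrightarrow> regret f q0 p T \<le> C)"

end

theory Submission
  imports Defs
begin

text \<open>
  Passivity of the learning operator with shift \<open>e\<^sub>j\<close> says that its storage function
  \<open>L\<^sub>j\<close> decreases along the dynamic by at most \<open>\<integral>\<^sub>0\<^sup>T \<langle>p, e\<^sub>j - x\<rangle>\<close>, which is exactly the regret
  against action \<open>j\<close>. As \<open>L\<^sub>j\<close> is bounded below, this regret never exceeds
  \<open>L\<^sub>j(q\<^sup>0) - inf L\<^sub>j\<close>; the regret is the largest of these finitely many regrets.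
\<close>

lemma set_borel_measurable_subset:
  fixes f :: "'a \<Rightarrow> 'b::{second_countable_topology, real_normed_vector}"
  assumes "set_borel_measurable M A f" "B \<in> sets M" "B \<subseteq> A"
  shows "set_borel_measurable M B f"
proof -
  have "(\<lambda>x. indicator B x *\<^sub>R f x) = (\<lambda>x. indicator B x *\<^sub>R (indicator A x *\<^sub>R f x))"
    using \<open>B \<subseteq> A\<close> by (auto simp: indicator_def fun_eq_iff)
  also have "\<dots> \<in> borel_measurable M"
    using borel_measurable_indicator[OF assms(2)] assms(1)
    unfolding set_borel_measurable_def by (rule borel_measurable_scaleR)
  finally show ?thesis
    unfolding set_borel_measurable_def .
qed

lemma set_borel_measurable_inner:
  fixes p g :: "'a \<Rightarrow> 'b::{second_countable_topology, real_inner}"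
  assumes "set_borel_measurable M S p" "g \<in> borel_measurable M"
  shows "set_borel_measurable M S (\<lambda>x. inner (p x) (g x))"
proof -
  have "(\<lambda>x. indicator S x *\<^sub>R inner (p x) (g x)) = (\<lambda>x. inner (indicator S x *\<^sub>R p x) (g x))"
    by simp
  also have "\<dots> \<in> borel_measurable M"
    using assms unfolding set_borel_measurable_def by (rule borel_measurable_inner)
  finally show ?thesis
    unfolding set_borel_measurable_def .
qed

lemma set_integrable_if_square_integrable:
  fixes f :: "'a \<Rightarrow> 'b::{banach, second_countable_topology}"
  assumes "set_borel_measurable M S f" "set_integrable M S (\<lambda>x. norm (f x) ^ 2)"
    and "S \<in> sets M" "emeasure M S < \<infinity>"
  shows "set_integrable M S f"
proof (rule set_integrable_bound)
  show "set_borel_measurable M S f"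
    by (rule assms(1))
  have "set_integrable M S (\<lambda>_. 1 :: real)"
    using assms(3,4) unfolding set_integrable_def by simp
  then show "set_integrable M S (\<lambda>x. 1 + norm (f x) ^ 2)"
    using assms(2) by (rule set_integral_add(1))
  have "r \<le> 1 + r ^ 2" for r :: real
    using zero_le_power2[of "r - 1/2"] by (simp add: power2_diff power2_eq_square field_simps)
  then show "AE x in M. x \<in> S \<longrightarrow> norm (f x) \<le> norm (1 + norm (f x) ^ 2)"
    by simp
qed

lemma set_integrable_inner_bounded:
  fixes p g :: "'a \<Rightarrow> 'b::{real_inner, banach, second_countable_topology}"
  assumes "set_integrable M S p" "g \<in> borel_measurable M" "\<And>x. norm (g x) \<le> B"
  shows "set_integrable M S (\<lambda>x. inner (p x) (g x))"
proof (rule set_integrable_bound)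
  show "set_integrable M S (\<lambda>x. B *\<^sub>R p x)"
    using assms(1) by (rule set_integrable_scaleR_right)
  have "set_borel_measurable M S p"
    using assms(1) unfolding set_integrable_def set_borel_measurable_def
    by (rule borel_measurable_integrable)
  then show "set_borel_measurable M S (\<lambda>x. inner (p x) (g x))"
    using assms(2) by (rule set_borel_measurable_inner)
  have "norm (inner (p x) (g x)) \<le> norm (B *\<^sub>R p x)" for x
  proof -
    have "\<bar>inner (p x) (g x)\<bar> \<le> norm (p x) * norm (g x)"
      by (rule Cauchy_Schwarz_ineq2)
    also have "\<dots> \<le> norm (p x) * \<bar>B\<bar>"
      using assms(3)[of x] by (intro mult_left_mono) auto
    finally show ?thesis
      by (simp add: mult.commute)
  qed
  then show "AE x in M. x \<in> S \<longrightarrow> norm (inner (p x) (g x)) \<le> norm (B *\<^sub>R p x)"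
    by (intro AE_I2 impI)
qed

lemma admissible_input_set_integrable:
  assumes "admissible_input p" "T \<ge> 0"
  shows "set_integrable lborel {0..T} p"
proof (rule set_integrable_if_square_integrable)
  have "set_borel_measurable lborel {0..} p"
    using assms(1) unfolding admissible_input_def by blast
  then show "set_borel_measurable lborel {0..T} p"
    by (rule set_borel_measurable_subset) auto
  show "set_integrable lborel {0..T} (\<lambda>x. norm (p x) ^ 2)"
    using assms unfolding admissible_input_def by blast
  show "emeasure lborel {0..T} < \<infinity>"
    using assms(2) by simp
  show "{0..T} \<in> sets lborel"
    by simp
qed

lemma norm_le_1_if_prob_simplex:
  assumes "x \<in> prob_simplex"
  shows "norm x \<le> 1"
proof -
  have "norm x \<le> (\<Sum>j\<in>UNIV. \<bar>x $ j\<bar>)"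
    by (rule norm_le_l1_cart)
  also have "\<dots> = (\<Sum>j\<in>UNIV. x $ j)"
    using assms by (simp add: prob_simplex_def)
  also have "\<dots> = 1"
    using assms by (simp add: prob_simplex_def)
  finally show ?thesis .
qed

lemma state_measurable:
  assumes "admissible_input p"
  shows "state q0 p \<in> borel_measurable lborel"
proof -
  have [measurable]: "(\<lambda>x. indicator {0..} x *\<^sub>R p x) \<in> borel_measurable lborel"
    using assms unfolding admissible_input_def set_borel_measurable_def by simp
  have "(\<lambda>(t, x). indicator {0..t} x *\<^sub>R p x) =
     (\<lambda>z. indicator {z. snd z \<le> fst z} z *\<^sub>R (indicator {0..} (snd z) *\<^sub>R p (snd z)))"
    by (auto simp: indicator_def fun_eq_iff)
  also have "\<dots> \<in> borel_measurable (lborel \<Otimes>\<^sub>M lborel)"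
    by measurable
  finally have "(\<lambda>t. LINT x|lborel. indicator {0..t} x *\<^sub>R p x) \<in> borel_measurable lborel"
    by (rule lborel.borel_measurable_lebesgue_integral)
  then show ?thesis
    unfolding state_def set_lebesgue_integral_def by measurable
qed

lemma set_integral_inner_diff_axis:
  fixes p g :: "'a \<Rightarrow> real^'n"
  assumes "set_integrable M S p" "g \<in> borel_measurable M" "\<And>t. norm (g t) \<le> 1"
  shows "(LINT t:S|M. inner (p t) (g t - axis j 1)) =
    (LINT t:S|M. inner (p t) (g t)) - (LINT t:S|M. p t $ j)"
proof -
  have "(LINT t:S|M. inner (p t) (g t - axis j 1)) =
      (LINT t:S|M. inner (p t) (g t) - inner (p t) (axis j 1))"
    by (simp add: inner_diff_right)
  also have "\<dots> = (LINT t:S|M. inner (p t) (g t)) - (LINT t:S|M. inner (p t) (axis j 1))"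
    using assms by (intro set_integral_diff(2) set_integrable_inner_bounded) auto
  finally show ?thesis
    by (simp add: inner_axis)
qed

definition action_regret ::
  "(real^'n \<Rightarrow> real^'n) \<Rightarrow> real^'n \<Rightarrow> (real \<Rightarrow> real^'n) \<Rightarrow> real \<Rightarrow> 'n \<Rightarrow> real" where
  "action_regret f q0 p T j =
     (LINT \<tau>:{0..T}|lborel. p \<tau> $ j) - (LINT \<tau>:{0..T}|lborel. inner (p \<tau>) (f (state q0 p \<tau>)))"

lemma regret_le_iff: "regret f q0 p T \<le> C \<longleftrightarrow> (\<forall>j. action_regret f q0 p T j \<le> C)"
  unfolding regret_def action_regret_def by (simp add: Max_le_iff algebra_simps)

lemma finitely_passive_op_axis_action_regret_bounded:
  fixes f :: "real^'n \<Rightarrow> real^'n"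
  assumes conv: "\<And>q. f q \<in> prob_simplex"
    and meas [measurable]: "f \<in> borel_measurable borel"
    and fp: "finitely_passive_op f (axis j 1)"
  shows "\<exists>C. \<forall>p T. admissible_input p \<and> T \<ge> 0 \<longrightarrow> action_regret f q0 p T j \<le> C"
proof -
  obtain L :: "real^'n \<Rightarrow> real" where L_bdd: "bdd_below (range L)"
    and storage: "\<And>p t. admissible_input p \<Longrightarrow> t \<ge> 0 \<Longrightarrow> L (state q0 p t) \<le>
      L q0 + (LINT \<tau>:{0..t}|lborel. inner (p \<tau>) (f (state q0 p \<tau>) - axis j 1))"
    using fp unfolding finitely_passive_op_def by blast
  show ?thesis
  proof (intro exI allI impI)
    fix p :: "real \<Rightarrow> real^'n" and T :: real
    assume "admissible_input p \<and> T \<ge> 0"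
    then have adm: "admissible_input p" and "T \<ge> 0"
      by auto
    have [measurable]: "state q0 p \<in> borel_measurable lborel"
      using adm by (rule state_measurable)
    have "(LINT \<tau>:{0..T}|lborel. inner (p \<tau>) (f (state q0 p \<tau>) - axis j 1)) = - action_regret f q0 p T j"
      unfolding action_regret_def
      using admissible_input_set_integrable[OF adm \<open>T \<ge> 0\<close>] norm_le_1_if_prob_simplex[OF conv]
      by (subst set_integral_inner_diff_axis) auto
    then show "action_regret f q0 p T j \<le> L q0 - (INF q. L q)"
      using storage[OF adm \<open>T \<ge> 0\<close>] cInf_lower[OF rangeI L_bdd, of "state q0 p T"] by linarith
  qed
qed

theorem theorem4p2:
  fixes f :: "real^'n \<Rightarrow> real^'n"
  assumes conv: "\<And>q. f q \<in> prob_simplex"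
    and meas: "f \<in> borel_measurable borel"
    and fp: "finitely_passive f"
  shows "guarantees_constant_regret f"
  unfolding guarantees_constant_regret_def
proof
  fix q0 :: "real^'n"
  have "\<forall>j. \<exists>C. \<forall>p T. admissible_input p \<and> T \<ge> 0 \<longrightarrow> action_regret f q0 p T j \<le> C"
    using fp conv meas unfolding finitely_passive_def
    by (blast intro: finitely_passive_op_axis_action_regret_bounded)
  then obtain C where C: "\<And>j p T. admissible_input p \<Longrightarrow> T \<ge> 0 \<Longrightarrow> action_regret f q0 p T j \<le> C j"
    by metis
  have "regret f q0 p T \<le> Max (range C)" if "admissible_input p" "T > 0" for p T
  proof -
    have "action_regret f q0 p T j \<le> C j" for j
      using C that by (simp add: less_imp_le)
    moreover have "C j \<le> Max (range C)" for j
      by (rule Max_ge) auto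
    ultimately show ?thesis
      unfolding regret_le_iff by (meson order_trans)
  qed
  then show "\<exists>C. \<forall>p T. admissible_input p \<and> T > 0 \<longrightarrow> regret f q0 p T \<le> C"
    by blast
qed

end
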